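(* Let $X$ be a uniform space equipped with a uniformly continuous and expansive action of a group $\Gamma$, and let $f \colon X \to X$ be a uniformly continuous and $\Gamma$-equivariant map. Suppose that $Y$ is a subset of $X$ such that the restriction of $f$ to $Y$ is a uniform embedding. Then there exists an entourage $V$ of $X$ with the following property: if $Z$ is a $\Gamma$-invariant subset of $X$ such that $Z \subset V[Y]$, then the restriction of $f$ to $Z$ is injective.
   Context: For $V \subset X \times X$ and $A \subset X$, $V[A] = \{x \in X : (x,a) \in V \text{ for some } a \in A\}$. An action of $\Gamma$ on a uniform space $X$ is uniformly continuous if each map $x \mapsto \gamma x$ is uniformly continuous; it is expansive if there is an entourage $W_0$ of $X$ such that for any two distinct $x,y \in X$ there is $\gamma \in \Gamma$ with $(\gamma x,\gamma y) \notin W_0$. A map $f$ restricted to $Y$ is a uniform embedding if it is injective on $Y$ and induces a uniform isomorphism from $Y$ onto $f(Y)$ (with the induced uniform structures). *)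

theory Defs
  imports "HOL-Analysis.Analysis" "HOL-Algebra.Group_Action"
begin

definition entourage :: "('a::uniform_space \<times> 'a) set \<Rightarrow> bool" where
  "entourage V \<longleftrightarrow> eventually (\<lambda>p. p \<in> V) uniformity"

definition rel_image :: "('a \<times> 'a) set \<Rightarrow> 'a set \<Rightarrow> 'a set" where
  "rel_image V A = {x. \<exists>a\<in>A. (x, a) \<in> V}"

definition uniform_embedding_on :: "'a::uniform_space set \<Rightarrow> ('a \<Rightarrow> 'b::uniform_space) \<Rightarrow> bool" where
  "uniform_embedding_on Y f \<longleftrightarrow> inj_on f Y \<and> uniformly_continuous_on Y f
     \<and> uniformly_continuous_on (f ` Y) (the_inv_into Y f)"

definition expansive_action :: "('g, 'b) monoid_scheme \<Rightarrow> ('g \<Rightarrow> 'a::uniform_space \<Rightarrow> 'a) \<Rightarrow> bool" where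
  "expansive_action G \<phi> \<longleftrightarrow> (\<exists>W0. entourage W0 \<and>
     (\<forall>x y. x \<noteq> y \<longrightarrow> (\<exists>\<gamma>\<in>carrier G. (\<phi> \<gamma> x, \<phi> \<gamma> y) \<notin> W0)))"

end

theory Submission
  imports Defs
begin

text \<open>
  Choose a symmetric entourage V so small that, for x and x' that are V-close to points y and y'
  of Y, the equality f x = f x' forces f y and f y' to be close, hence (f being a uniform
  embedding on Y) y and y' to be close, hence x and x' to be W0-close for the expansivity
  entourage W0. If Z is invariant and x, x' in Z are distinct with f x = f x', some \<gamma> moves
  them W0-apart; but \<gamma> x and \<gamma> x' still lie in Z, and f (\<gamma> x) = f (\<gamma> x') by equivariance.
\<close>

lemma entourage_refl: "entourage V \<Longrightarrow> (x, x) \<in> V"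
  unfolding entourage_def by (rule uniformity_refl)

lemma entourage_Int: "entourage A \<Longrightarrow> entourage B \<Longrightarrow> entourage (A \<inter> B)"
  unfolding entourage_def by (simp add: eventually_conj)

lemma entourage_converse: "entourage V \<Longrightarrow> entourage (V\<inverse>)"
  unfolding entourage_def by (drule uniformity_sym) (auto elim: eventually_mono)

lemma entourage_relcomp_subset:
  assumes "entourage V"
  obtains W where "entourage W" "W O W \<subseteq> V"
proof -
  obtain D where "eventually D uniformity" "\<And>x y z. D (x, y) \<Longrightarrow> D (y, z) \<Longrightarrow> (x, z) \<in> V"
    using assms unfolding entourage_def by (rule uniformity_transE) blast
  then show thesis
    by (intro that[of "{p. D p}"]) (auto simp: entourage_def)
qed

lemma entourage_relcomp3_subset:
  assumes "entourage V"
  obtains W where "entourage W" "W O W O W \<subseteq> V"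
proof -
  obtain W1 where W1: "entourage W1" "W1 O W1 \<subseteq> V"
    using assms by (rule entourage_relcomp_subset)
  obtain W where W: "entourage W" "W O W \<subseteq> W1"
    using W1(1) by (rule entourage_relcomp_subset)
  have "W \<subseteq> W1"
    using W by (auto intro: entourage_refl)
  then have "W O W O W \<subseteq> W1 O W1"
    using W(2) by blast
  with W(1) W1(2) show thesis
    by (intro that) auto
qed

lemma entourage_vimage_uniformly_continuous:
  assumes "uniformly_continuous_on UNIV f" "entourage E"
  shows "entourage (map_prod f f -` E)"
  using uniformly_continuous_onD[OF assms(1) assms(2)[unfolded entourage_def]]
  by (simp add: entourage_def case_prod_unfold map_prod_def)

lemma uniform_embedding_on_entourage_inverse:
  assumes "uniform_embedding_on Y f" "entourage W"
  obtains E where "entourage E" "\<And>y y'. y \<in> Y \<Longrightarrow> y' \<in> Y \<Longrightarrow> (f y, f y') \<in> E \<Longrightarrow> (y, y') \<in> W"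
proof -
  let ?g = "the_inv_into Y f"
  have inj: "inj_on f Y" and g_uc: "uniformly_continuous_on (f ` Y) ?g"
    using assms(1) unfolding uniform_embedding_on_def by auto
  have "eventually (\<lambda>(u, v). u \<in> f ` Y \<longrightarrow> v \<in> f ` Y \<longrightarrow> (?g u, ?g v) \<in> W) uniformity"
    using uniformly_continuous_onD[OF g_uc assms(2)[unfolded entourage_def]] .
  then show thesis
    by (intro that[of "{(u, v). u \<in> f ` Y \<longrightarrow> v \<in> f ` Y \<longrightarrow> (?g u, ?g v) \<in> W}"])
      (auto simp: entourage_def case_prod_unfold the_inv_into_f_f[OF inj])
qed

lemma uniform_embedding_on_collapse_entourage:
  fixes f :: "'a::uniform_space \<Rightarrow> 'b::uniform_space"
  assumes f_uc: "uniformly_continuous_on UNIV f" and emb: "uniform_embedding_on Y f"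
    and "entourage W0"
  obtains V where "entourage V"
    "\<And>x x'. x \<in> rel_image V Y \<Longrightarrow> x' \<in> rel_image V Y \<Longrightarrow> f x = f x' \<Longrightarrow> (x, x') \<in> W0"
proof -
  obtain W where W: "entourage W" "W O W O W \<subseteq> W0"
    using \<open>entourage W0\<close> by (rule entourage_relcomp3_subset)
  obtain E where E: "entourage E"
    and E_W: "\<And>y y'. y \<in> Y \<Longrightarrow> y' \<in> Y \<Longrightarrow> (f y, f y') \<in> E \<Longrightarrow> (y, y') \<in> W"
    using uniform_embedding_on_entourage_inverse[OF emb W(1)] by blast
  obtain D where D: "entourage D" "D O D \<subseteq> E"
    using E by (rule entourage_relcomp_subset)
  define V where "V = (W \<inter> W\<inverse>) \<inter> map_prod f f -` (D \<inter> D\<inverse>)"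
  have "entourage V"
    unfolding V_def using W(1) D(1)
    by (intro entourage_Int entourage_converse entourage_vimage_uniformly_continuous f_uc)
  moreover have "(x, x') \<in> W0"
    if near: "x \<in> rel_image V Y" "x' \<in> rel_image V Y" and "f x = f x'" for x x'
  proof -
    obtain y y' where y: "y \<in> Y" "(x, y) \<in> V" and y': "y' \<in> Y" "(x', y') \<in> V"
      using near unfolding rel_image_def by blast
    have "(f y, f y') \<in> D O D"
      using y(2) y'(2) \<open>f x = f x'\<close> unfolding V_def by auto
    then have "(y, y') \<in> W"
      using D(2) y(1) y'(1) by (intro E_W) auto
    moreover have "(x, y) \<in> W" "(y', x') \<in> W"
      using y(2) y'(2) unfolding V_def by auto
    ultimately show "(x, x') \<in> W0"
      using W(2) by blast
  qed
  ultimately show thesis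
    by (rule that)
qed

theorem theorem4p1:
  fixes G :: "('g, 'b) monoid_scheme"
    and \<phi> :: "'g \<Rightarrow> 'a::uniform_space \<Rightarrow> 'a"
    and f :: "'a \<Rightarrow> 'a"
    and Y :: "'a set"
  assumes act: "group_action G (UNIV :: 'a set) \<phi>"
    and act_uc: "\<And>\<gamma>. \<gamma> \<in> carrier G \<Longrightarrow> uniformly_continuous_on UNIV (\<phi> \<gamma>)"
    and expansive: "expansive_action G \<phi>"
    and f_uc: "uniformly_continuous_on UNIV f"
    and f_equiv: "\<And>\<gamma> x. \<gamma> \<in> carrier G \<Longrightarrow> f (\<phi> \<gamma> x) = \<phi> \<gamma> (f x)"
    and emb: "uniform_embedding_on Y f"
  shows "\<exists>V. entourage V \<and>
           (\<forall>Z. (\<forall>\<gamma>\<in>carrier G. \<phi> \<gamma> ` Z \<subseteq> Z) \<and> Z \<subseteq> rel_image V Y \<longrightarrow> inj_on f Z)"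
proof -
  obtain W0 where "entourage W0"
    and separates: "\<And>x y. x \<noteq> y \<Longrightarrow> \<exists>\<gamma>\<in>carrier G. (\<phi> \<gamma> x, \<phi> \<gamma> y) \<notin> W0"
    using expansive unfolding expansive_action_def by blast
  obtain V where "entourage V"
    and collapse: "\<And>x x'. x \<in> rel_image V Y \<Longrightarrow> x' \<in> rel_image V Y \<Longrightarrow> f x = f x' \<Longrightarrow> (x, x') \<in> W0"
    using uniform_embedding_on_collapse_entourage[OF f_uc emb \<open>entourage W0\<close>] by blast
  have "inj_on f Z" if invariant: "\<forall>\<gamma>\<in>carrier G. \<phi> \<gamma> ` Z \<subseteq> Z" and small: "Z \<subseteq> rel_image V Y" for Z
  proof (rule inj_onI, rule ccontr)
    fix x x' assume "x \<in> Z" "x' \<in> Z" "f x = f x'" "x \<noteq> x'"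
    then obtain \<gamma> where \<gamma>: "\<gamma> \<in> carrier G" "(\<phi> \<gamma> x, \<phi> \<gamma> x') \<notin> W0"
      using separates by blast
    have "\<phi> \<gamma> x \<in> rel_image V Y" "\<phi> \<gamma> x' \<in> rel_image V Y"
      using invariant small \<gamma>(1) \<open>x \<in> Z\<close> \<open>x' \<in> Z\<close> by auto
    moreover have "f (\<phi> \<gamma> x) = f (\<phi> \<gamma> x')"
      using f_equiv[OF \<gamma>(1)] \<open>f x = f x'\<close> by simp
    ultimately show False
      using collapse \<gamma>(2) by blast
  qed
  with \<open>entourage V\<close> show ?thesis
    by blast
qed

end
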